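(* Let $i\in K$, let $w$ be a strong minuscule element with $\Lambda_w=\Lambda_i$, and let $w=s_{i_1}\cdots s_{i_r}$ be a reduced expression of $w$ (so that $i_r=i$). For each $1\le p\le r-1$ put $u_p:=\#\{p+1\le a\le r\mid i_a\in\operatorname{adj}_s(i_p)\}$. Then $u_p$ is a nonnegative even integer if $i_p=i$, and $u_p$ is a positive odd integer if $i_p\ne i$.
   Context: Let $\mathfrak g$ be a finite-dimensional simple Lie algebra over $\mathbb C$ of type $\mathrm A_n$, $\mathrm B_n$, $\mathrm C_n$ or $\mathrm D_n$, with index set $I=\{1,\dots,n\}$, simple roots $\alpha_i$, simple coroots $\alpha_i^\vee$, Cartan matrix $a_{ij}=\langle\alpha_j,\alpha_i^\vee\rangle$, fundamental weights $\Lambda_i$, integral weights $P=\bigoplus_i\mathbb Z\Lambda_i$, dominant integral weights $P^+=\sum_i\mathbb Z_{\ge0}\Lambda_i$, Weyl group $W$ generated by simple reflections $s_i$. The Dynkin diagrams are labeled as follows: type $\mathrm A_n$: chain $1-2-\cdots-n$; type $\mathrm B_n$: chain $1-2-\cdots-n$ with a double bond between $1$ and $2$, $\alpha_1$ short and $\alpha_2,\dots,\alpha_n$ long; type $\mathrm C_n$: chain $1-2-\cdots-n$ with a double bond between $1$ and $2$, $\alpha_1$ long and $\alpha_2,\dots,\alpha_n$ short; type $\mathrm D_n$: chain $n-(n-1)-\cdots-3$ with node $3$ joined to both nodes $1$ and $2$. Set $K=I$ in types $\mathrm A_n,\mathrm D_n$, $K=\{1\}$ in type $\mathrm B_n$,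 $K=I\setminus\{1\}$ in type $\mathrm C_n$. For $j\in I$, $\operatorname{adj}_s(j):=\{m\in I\mid a_{jm}=-1\}$. For $\Lambda\in P$, $w\in W$ is $\Lambda$-minuscule if there is a reduced expression $w=s_{i_1}\cdots s_{i_r}$ with $\langle s_{i_{p+1}}\cdots s_{i_r}(\Lambda),\alpha_{i_p}^\vee\rangle=1$ for all $1\le p\le r$ (this then holds for every reduced expression); $w$ is dominant minuscule if it is $\Lambda$-minuscule for some $\Lambda\in P^+$. A dominant minuscule $w$ is strong minuscule if there is a unique $\Lambda\in P^+$, denoted $\Lambda_w$, such that $w$ is $\Lambda$-minuscule. It is known that for a strong minuscule $w$ with $\Lambda_w=\Lambda_i$, every reduced expression of $w$ ends with $s_i$. *)

theory Defs
  imports Main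
begin

datatype ctype = TA | TB | TC | TD

definition valid_type :: "ctype \<Rightarrow> nat \<Rightarrow> bool" where
  "valid_type t n = (case t of TA \<Rightarrow> n \<ge> 1 | TB \<Rightarrow> n \<ge> 2 | TC \<Rightarrow> n \<ge> 2 | TD \<Rightarrow> n \<ge> 4)"

definition Iset :: "nat \<Rightarrow> nat set" where
  "Iset n = {1..n}"

text \<open>Simply-laced adjacency in the Dynkin diagram (ignoring multiplicities).\<close>
definition dyn_edge :: "ctype \<Rightarrow> nat \<Rightarrow> nat \<Rightarrow> bool" where
  "dyn_edge t i j = (case t of
      TD \<Rightarrow> ({i, j} = {1, 3} \<or> {i, j} = {2, 3} \<or> (3 \<le> i \<and> 3 \<le> j \<and> (i = j + 1 \<or> j = i + 1)))
    | _ \<Rightarrow> (i = j + 1 \<or> j = i + 1))"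

text \<open>Cartan matrix a_ij = <alpha_j, alpha_i^vee>, zero outside I x I.
  Type B: alpha_1 short, alpha_2 long, so a_12 = -2, a_21 = -1.
  Type C: alpha_1 long, alpha_2 short, so a_12 = -1, a_21 = -2.\<close>
definition cartan :: "ctype \<Rightarrow> nat \<Rightarrow> nat \<Rightarrow> nat \<Rightarrow> int" where
  "cartan t n i j =
     (if i \<notin> Iset n \<or> j \<notin> Iset n then 0
      else if i = j then 2
      else if \<not> dyn_edge t i j then 0
      else if t = TB \<and> i = 1 \<and> j = 2 then -2
      else if t = TC \<and> i = 2 \<and> j = 1 then -2
      else -1)"

definition Kset :: "ctype \<Rightarrow> nat \<Rightarrow> nat set" where
  "Kset t n = (case t of TA \<Rightarrow> Iset n | TD \<Rightarrow> Iset n | TB \<Rightarrow> {1} | TC \<Rightarrow> Iset n - {1})"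

definition adj_s :: "ctype \<Rightarrow> nat \<Rightarrow> nat \<Rightarrow> nat set" where
  "adj_s t n j = {m \<in> Iset n. cartan t n j m = -1}"

text \<open>A weight lambda is encoded by its coordinates lambda j = <lambda, alpha_j^vee>;
  P is the lattice of integral weights (coordinates supported on I).\<close>
definition Pset :: "nat \<Rightarrow> (nat \<Rightarrow> int) set" where
  "Pset n = {lam. \<forall>j. j \<notin> Iset n \<longrightarrow> lam j = 0}"

definition Pplus :: "nat \<Rightarrow> (nat \<Rightarrow> int) set" where
  "Pplus n = {lam \<in> Pset n. \<forall>j \<in> Iset n. lam j \<ge> 0}"

definition fund :: "nat \<Rightarrow> nat \<Rightarrow> int" where
  "fund i = (\<lambda>j. if j = i then 1 else 0)"

text \<open>s_i(lambda) = lambda - <lambda, alpha_i^vee> alpha_i, with <alpha_i, alpha_j^vee> = a_ji.\<close>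
definition sref :: "ctype \<Rightarrow> nat \<Rightarrow> nat \<Rightarrow> (nat \<Rightarrow> int) \<Rightarrow> (nat \<Rightarrow> int)" where
  "sref t n i lam = (\<lambda>j. lam j - lam i * cartan t n j i)"

definition word_act :: "ctype \<Rightarrow> nat \<Rightarrow> nat list \<Rightarrow> (nat \<Rightarrow> int) \<Rightarrow> (nat \<Rightarrow> int)" where
  "word_act t n ws = foldr (\<lambda>i f. sref t n i \<circ> f) ws id"

text \<open>Weyl group elements are represented faithfully by their action on P.\<close>
definition weyl_elt :: "ctype \<Rightarrow> nat \<Rightarrow> nat list \<Rightarrow> (nat \<Rightarrow> int) \<Rightarrow> (nat \<Rightarrow> int)" where
  "weyl_elt t n ws = (\<lambda>lam. if lam \<in> Pset n then word_act t n ws lam else undefined)"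

definition weyl_group :: "ctype \<Rightarrow> nat \<Rightarrow> ((nat \<Rightarrow> int) \<Rightarrow> (nat \<Rightarrow> int)) set" where
  "weyl_group t n = {weyl_elt t n ws | ws. set ws \<subseteq> Iset n}"

definition reduced_expr :: "ctype \<Rightarrow> nat \<Rightarrow> ((nat \<Rightarrow> int) \<Rightarrow> (nat \<Rightarrow> int)) \<Rightarrow> nat list \<Rightarrow> bool" where
  "reduced_expr t n w ws \<longleftrightarrow> set ws \<subseteq> Iset n \<and> weyl_elt t n ws = w \<and>
     (\<forall>vs. set vs \<subseteq> Iset n \<and> weyl_elt t n vs = w \<longrightarrow> length ws \<le> length vs)"

text \<open>w is Lambda-minuscule (list positions are 0-indexed: ws!q = i_{q+1}).\<close>
definition lam_minuscule :: "ctype \<Rightarrow> nat \<Rightarrow> (nat \<Rightarrow> int) \<Rightarrow> ((nat \<Rightarrow> int) \<Rightarrow> (nat \<Rightarrow> int)) \<Rightarrow> bool" where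
  "lam_minuscule t n Lam w \<longleftrightarrow> (\<exists>ws. reduced_expr t n w ws \<and>
     (\<forall>q < length ws. word_act t n (drop (Suc q) ws) Lam (ws ! q) = 1))"

definition dominant_minuscule :: "ctype \<Rightarrow> nat \<Rightarrow> ((nat \<Rightarrow> int) \<Rightarrow> (nat \<Rightarrow> int)) \<Rightarrow> bool" where
  "dominant_minuscule t n w \<longleftrightarrow> w \<in> weyl_group t n \<and> (\<exists>Lam \<in> Pplus n. lam_minuscule t n Lam w)"

definition strong_minuscule :: "ctype \<Rightarrow> nat \<Rightarrow> ((nat \<Rightarrow> int) \<Rightarrow> (nat \<Rightarrow> int)) \<Rightarrow> bool" where
  "strong_minuscule t n w \<longleftrightarrow> dominant_minuscule t n w \<and> (\<exists>!Lam. Lam \<in> Pplus n \<and> lam_minuscule t n Lam w)"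

definition Lambda_w :: "ctype \<Rightarrow> nat \<Rightarrow> ((nat \<Rightarrow> int) \<Rightarrow> (nat \<Rightarrow> int)) \<Rightarrow> (nat \<Rightarrow> int)" where
  "Lambda_w t n w = (THE Lam. Lam \<in> Pplus n \<and> lam_minuscule t n Lam w)"

end

theory Submission
  imports Defs
begin

text \<open>Write the given reduced expression as w = s_{i_1} ... s_{i_r}. Its minuscule value at
  position p is the pairing of the weight with the coroot
  beta_p = s_{i_r} ... s_{i_{p+1}} (alpha_{i_p})^vee, and beta_1, ..., beta_r are the positive
  coroots sent to negative ones by w. This set depends only on w and its members are pairwise
  non-proportional, so every reduced expression of w is Lambda_i-minuscule. The positivity fact
  behind it (if l(w s) > l(w) then w (alpha_s)^vee is positive) is proved by Deodhar's reduction to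
  rank two parabolic subgroups, where it is a computation with alternating words.
  Along a Lambda_i-minuscule word each reflection subtracts its simple root, so evaluating at
  position p gives 1 = delta_{i_p i} - sum_{a > p} a_{i_p i_a}; modulo 2 only the entries -1
  survive, which gives the parity of u_p, and an odd u_p is positive.\<close>

lemma dyn_edge_sym: "dyn_edge t i j = dyn_edge t j i"
  by (cases t) (auto simp: dyn_edge_def insert_commute)

definition scale :: "int \<Rightarrow> (nat \<Rightarrow> int) \<Rightarrow> nat \<Rightarrow> int" where
  "scale c d = (\<lambda>m. c * d m)"

locale cartan_action =
  fixes t :: ctype and n :: nat
begin

abbreviation "I \<equiv> Iset n"

abbreviation "A \<equiv> cartan t n"

lemma finite_I: "finite I"
  by (simp add: Iset_def)

lemma cartan_outside: "j \<notin> I \<or> m \<notin> I \<Longrightarrow> A j m = 0"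
  by (auto simp: cartan_def)

lemma cartan_diag: "j \<in> I \<Longrightarrow> A j j = 2"
  by (simp add: cartan_def)

lemma cartan_offdiag_cases:
  assumes "s \<in> I" "r \<in> I" "s \<noteq> r"
  shows "(A s r = 0 \<and> A r s = 0) \<or> (A s r = -1 \<and> A r s = -1) \<or>
         (A s r = -1 \<and> A r s = -2) \<or> (A s r = -2 \<and> A r s = -1)"
  using assms by (auto simp: cartan_def dyn_edge_sym)

lemma odd_cartan_iff: "odd (A j m) \<longleftrightarrow> A j m = -1"
  by (auto simp: cartan_def)

subsection \<open>Weights and the action of words\<close>

lemma sref_sref: "sref t n j (sref t n j l) = l"
  by (cases "j \<in> I") (auto simp: sref_def cartan_diag cartan_outside algebra_simps)

lemma sref_Pset: "l \<in> Pset n \<Longrightarrow> sref t n j l \<in> Pset n"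
  by (auto simp: sref_def Pset_def cartan_outside)

lemma word_act_Nil [simp]: "word_act t n [] = id"
  by (simp add: word_act_def)

lemma word_act_Cons [simp]: "word_act t n (a # x) l = sref t n a (word_act t n x l)"
  by (simp add: word_act_def)

lemma word_act_append: "word_act t n (x @ y) l = word_act t n x (word_act t n y l)"
  by (induction x) auto

lemma word_act_Pset: "l \<in> Pset n \<Longrightarrow> word_act t n x l \<in> Pset n"
  by (induction x) (auto simp: sref_Pset)

lemma word_act_rev_cancel: "word_act t n (rev x) (word_act t n x l) = l"
  by (induction x arbitrary: l) (auto simp: word_act_append sref_sref)

lemma word_act_rev_cancel': "word_act t n x (word_act t n (rev x) l) = l"
  using word_act_rev_cancel[of "rev x"] by simp

definition weyl_eq :: "nat list \<Rightarrow> nat list \<Rightarrow> bool" where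
  "weyl_eq x y \<longleftrightarrow> (\<forall>l\<in>Pset n. word_act t n x l = word_act t n y l)"

lemma weyl_elt_eq_iff: "weyl_elt t n x = weyl_elt t n y \<longleftrightarrow> weyl_eq x y"
  unfolding weyl_elt_def weyl_eq_def by (auto simp: fun_eq_iff)

lemma weyl_eq_refl [simp]: "weyl_eq x x"
  by (simp add: weyl_eq_def)

lemma weyl_eq_sym: "weyl_eq x y \<Longrightarrow> weyl_eq y x"
  by (simp add: weyl_eq_def)

lemma weyl_eq_trans [trans]: "weyl_eq x y \<Longrightarrow> weyl_eq y z \<Longrightarrow> weyl_eq x z"
  by (simp add: weyl_eq_def)

lemma weyl_eq_append: "weyl_eq x x' \<Longrightarrow> weyl_eq y y' \<Longrightarrow> weyl_eq (x @ y) (x' @ y')"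
  by (simp add: weyl_eq_def word_act_append word_act_Pset)

lemma weyl_eq_rev:
  assumes "weyl_eq x y"
  shows "weyl_eq (rev x) (rev y)"
  unfolding weyl_eq_def
proof
  fix l assume l: "l \<in> Pset n"
  have "word_act t n (rev x) l = word_act t n (rev x) (word_act t n x (word_act t n (rev y) l))"
    using assms l word_act_Pset by (simp add: weyl_eq_def word_act_rev_cancel')
  then show "word_act t n (rev x) l = word_act t n (rev y) l"
    by (simp add: word_act_rev_cancel)
qed

lemma weyl_eq_cancel_square: "weyl_eq (x @ [a, a] @ y) (x @ y)"
  by (simp add: weyl_eq_def word_act_append sref_sref)

subsection \<open>Length and reduced words\<close>

definition weyl_length :: "nat list \<Rightarrow> nat" where
  "weyl_length x = (LEAST k. \<exists>y. set y \<subseteq> I \<and> weyl_eq y x \<and> length y = k)"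

lemma weyl_length_le: "set y \<subseteq> I \<Longrightarrow> weyl_eq y x \<Longrightarrow> weyl_length x \<le> length y"
  unfolding weyl_length_def by (rule Least_le) blast

lemma weyl_length_attained: "set x \<subseteq> I \<Longrightarrow> \<exists>y. set y \<subseteq> I \<and> weyl_eq y x \<and> length y = weyl_length x"
  unfolding weyl_length_def by (rule LeastI[where k = "length x"]) auto

lemma weyl_length_le_length: "set x \<subseteq> I \<Longrightarrow> weyl_length x \<le> length x"
  by (rule weyl_length_le) auto

lemma weyl_length_weyl_eq: "weyl_eq x x' \<Longrightarrow> weyl_length x = weyl_length x'"
  unfolding weyl_length_def by (metis weyl_eq_sym weyl_eq_trans)

lemma weyl_length_append: 
  assumes "set x \<subseteq> I" "set y \<subseteq> I"
  shows "weyl_length (x @ y) \<le> weyl_length x + weyl_length y"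
proof -
  obtain x' y' where "set x' \<subseteq> I" "weyl_eq x' x" "length x' = weyl_length x"
    "set y' \<subseteq> I" "weyl_eq y' y" "length y' = weyl_length y"
    using assms weyl_length_attained by metis
  then show ?thesis using weyl_length_le[of "x' @ y'" "x @ y"] weyl_eq_append by fastforce
qed

lemma weyl_length_weyl_eq_append_le:
  assumes "weyl_eq x (v @ u)" "set v \<subseteq> I" "set u \<subseteq> I"
  shows "weyl_length x \<le> weyl_length v + length u"
  using weyl_length_weyl_eq[OF assms(1)] weyl_length_append[OF assms(2,3)]
    weyl_length_le_length[OF assms(3)] by simp

lemma weyl_length_snoc_ge: 
  assumes "set x \<subseteq> I" "s \<in> I"
  shows "weyl_length x \<le> weyl_length (x @ [s]) + 1"
  using weyl_length_weyl_eq_append_le[of x "x @ [s]" "[s]"] weyl_eq_cancel_square[of x s "[]"] assms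
  by (simp add: weyl_eq_sym)

definition reduced :: "nat list \<Rightarrow> bool" where
  "reduced x \<longleftrightarrow> set x \<subseteq> I \<and> weyl_length x = length x"

lemma reduced_expr_imp_reduced:
  assumes "reduced_expr t n w x"
  shows "reduced x"
proof -
  have x: "set x \<subseteq> I" and w: "weyl_elt t n x = w" using assms by (auto simp: reduced_expr_def)
  obtain y where y: "set y \<subseteq> I" "weyl_eq y x" "length y = weyl_length x"
    using weyl_length_attained[OF x] by blast
  have "weyl_elt t n y = w" using y(2) w weyl_elt_eq_iff by metis
  then have "length x \<le> length y" using assms y(1) by (auto simp: reduced_expr_def)
  then show ?thesis using y weyl_length_le_length[OF x] x by (simp add: reduced_def)
qed

lemma reduced_append: "reduced (x @ y) \<Longrightarrow> reduced x \<and> reduced y"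
  using weyl_length_append[of x y] weyl_length_le_length[of x] weyl_length_le_length[of y]
  by (auto simp: reduced_def)

lemma reduced_take: "reduced x \<Longrightarrow> reduced (take k x)"
  using reduced_append[of "take k x" "drop k x"] by simp

lemma reduced_drop: "reduced x \<Longrightarrow> reduced (drop k x)"
  using reduced_append[of "take k x" "drop k x"] by simp

lemma reduced_rev:
  assumes "reduced x"
  shows "reduced (rev x)"
proof -
  have s: "set (rev x) \<subseteq> I" using assms by (auto simp: reduced_def)
  obtain y where y: "set y \<subseteq> I" "weyl_eq y (rev x)" "length y = weyl_length (rev x)"
    using weyl_length_attained[OF s] by blast
  have "weyl_length x \<le> length y" using weyl_length_le[of "rev y" x] y weyl_eq_rev[OF y(2)] by simp
  then show ?thesis using assms y weyl_length_le_length[OF s] s by (simp add: reduced_def)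
qed

subsection \<open>The action on coroots\<close>

text \<open>Coroots are encoded by their coordinates in the basis of simple coroots, so fund j also
  stands for (alpha_j)^vee. The weight alpha_j has coordinates a_mj, and
  s_j(beta) = beta - <alpha_j, beta> (alpha_j)^vee.\<close>

definition simple_root :: "nat \<Rightarrow> nat \<Rightarrow> int" where
  "simple_root j = (\<lambda>m. A m j)"

definition pairing :: "(nat \<Rightarrow> int) \<Rightarrow> (nat \<Rightarrow> int) \<Rightarrow> int" where
  "pairing l d = (\<Sum>m\<in>I. l m * d m)"

definition coroot_sref :: "nat \<Rightarrow> (nat \<Rightarrow> int) \<Rightarrow> nat \<Rightarrow> int" where
  "coroot_sref j d = d(j := d j - pairing (simple_root j) d)"

primrec coroot_act :: "nat list \<Rightarrow> (nat \<Rightarrow> int) \<Rightarrow> nat \<Rightarrow> int" where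
  "coroot_act [] d = d"
| "coroot_act (a # x) d = coroot_sref a (coroot_act x d)"

lemma pairing_fun_upd:
  assumes "j \<in> I"
  shows "pairing l (d(j := v)) = pairing l d + l j * (v - d j)"
proof -
  have "pairing l (d(j := v)) = l j * v + (\<Sum>m\<in>I - {j}. l m * d m)"
    using assms finite_I by (simp add: pairing_def sum.remove)
  moreover have "pairing l d = l j * d j + (\<Sum>m\<in>I - {j}. l m * d m)"
    using assms finite_I by (simp add: pairing_def sum.remove)
  ultimately show ?thesis by (simp add: algebra_simps)
qed

lemma pairing_fund_left: "m \<in> I \<Longrightarrow> pairing (fund m) d = d m"
  unfolding pairing_def fund_def using finite_I
  by (subst sum.cong[OF refl, of _ _ "\<lambda>k. if k = m then d k else 0"]) (auto simp: sum.delta)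

lemma pairing_fund_right: "m \<in> I \<Longrightarrow> pairing l (fund m) = l m"
  unfolding pairing_def fund_def using finite_I
  by (subst sum.cong[OF refl, of _ _ "\<lambda>k. if k = m then l k else 0"]) (auto simp: sum.delta)

lemma pairing_scale: "pairing l (scale c d) = c * pairing l d"
  by (simp add: pairing_def scale_def sum_distrib_left algebra_simps)

lemma coroot_sref_sref: "coroot_sref j (coroot_sref j d) = d"
proof (cases "j \<in> I")
  case True
  have "pairing (simple_root j) (coroot_sref j d) = - pairing (simple_root j) d"
    using pairing_fun_upd[OF True] cartan_diag[OF True] by (simp add: coroot_sref_def simple_root_def)
  then show ?thesis by (simp add: coroot_sref_def fun_eq_iff)
next
  case False
  then show ?thesis by (simp add: coroot_sref_def pairing_def simple_root_def cartan_outside)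
qed

lemma pairing_sref: "pairing (sref t n j l) d = pairing l (coroot_sref j d)"
proof (cases "j \<in> I")
  case True
  have "pairing (sref t n j l) d = pairing l d - l j * pairing (simple_root j) d"
    by (simp add: pairing_def sref_def simple_root_def algebra_simps sum_subtractf sum_distrib_left)
  then show ?thesis using pairing_fun_upd[OF True] by (simp add: coroot_sref_def)
next
  case False
  then show ?thesis by (simp add: coroot_sref_def sref_def pairing_def simple_root_def cartan_outside)
qed

lemma coroot_act_append: "coroot_act (x @ y) d = coroot_act x (coroot_act y d)"
  by (induction x) auto

lemma coroot_act_rev_cancel: "coroot_act (rev x) (coroot_act x d) = d"
  by (induction x arbitrary: d) (auto simp: coroot_act_append coroot_sref_sref)

lemma coroot_act_rev_cancel': "coroot_act x (coroot_act (rev x) d) = d"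
  using coroot_act_rev_cancel[of "rev x"] by simp

lemma coroot_sref_scale: "coroot_sref j (scale c d) = scale c (coroot_sref j d)"
  by (simp add: coroot_sref_def pairing_scale fun_eq_iff) (simp add: scale_def algebra_simps)

lemma coroot_act_scale: "coroot_act x (scale c d) = scale c (coroot_act x d)"
  by (induction x) (simp_all add: coroot_sref_scale)

lemma coroot_sref_add: "coroot_sref j (\<lambda>m. d m + e m) = (\<lambda>m. coroot_sref j d m + coroot_sref j e m)"
  by (simp add: coroot_sref_def pairing_def fun_eq_iff sum.distrib algebra_simps)

lemma coroot_act_add: "coroot_act x (\<lambda>m. d m + e m) = (\<lambda>m. coroot_act x d m + coroot_act x e m)"
  by (induction x) (simp_all add: coroot_sref_add)

lemma coroot_sref_fund_self: "j \<in> I \<Longrightarrow> coroot_sref j (fund j) = scale (-1) (fund j)"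
  using pairing_fund_right[of j "simple_root j"] cartan_diag[of j]
  by (auto simp: coroot_sref_def scale_def fund_def simple_root_def fun_eq_iff)

definition supported :: "(nat \<Rightarrow> int) \<Rightarrow> bool" where
  "supported d \<longleftrightarrow> (\<forall>m. m \<notin> I \<longrightarrow> d m = 0)"

lemma coroot_act_supported: "supported d \<Longrightarrow> supported (coroot_act x d)"
  by (induction x) (auto simp: supported_def coroot_sref_def pairing_def simple_root_def cartan_outside)

lemma fund_supported: "s \<in> I \<Longrightarrow> supported (fund s)"
  by (auto simp: supported_def fund_def)

lemma pairing_word_act: "pairing (word_act t n x l) d = pairing l (coroot_act (rev x) d)"
  by (induction x arbitrary: d) (auto simp: pairing_sref coroot_act_append)

lemma fund_Pset: "m \<in> I \<Longrightarrow> fund m \<in> Pset n"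
  by (auto simp: fund_def Pset_def)

text \<open>The m-th coordinate of a coroot is its pairing with the fundamental weight of m, and the
  action on weights depends only on the Weyl group element.\<close>

lemma coroot_act_weyl_eq:
  assumes "weyl_eq x y" "supported d"
  shows "coroot_act x d = coroot_act y d"
proof
  fix m
  show "coroot_act x d m = coroot_act y d m"
  proof (cases "m \<in> I")
    case True
    have "word_act t n (rev x) (fund m) = word_act t n (rev y) (fund m)"
      using weyl_eq_rev[OF assms(1)] fund_Pset[OF True] by (simp add: weyl_eq_def)
    then show ?thesis
      using pairing_word_act[of "rev x" "fund m" d] pairing_word_act[of "rev y" "fund m" d]
        pairing_fund_left[OF True] by simp
  next
    case False
    then show ?thesis using coroot_act_supported[OF assms(2)] by (simp add: supported_def)
  qed
qed

end

subsection \<open>Rank two\<close>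

primrec alt_word :: "nat \<Rightarrow> nat \<Rightarrow> nat \<Rightarrow> nat list" where
  "alt_word a b 0 = []"
| "alt_word a b (Suc k) = alt_word b a k @ [b]"

lemma set_alt_word: "set (alt_word a b k) \<subseteq> {a, b}"
  by (induction k arbitrary: a b) auto

lemma length_alt_word [simp]: "length (alt_word a b k) = k"
  by (induction k arbitrary: a b) auto

lemma alt_word_suffix: "j \<le> k \<Longrightarrow> \<exists>p. alt_word a b k = p @ alt_word a b j"
proof (induction k arbitrary: a b j)
  case 0
  then show ?case by simp
next
  case (Suc k)
  show ?case
  proof (cases j)
    case 0
    then show ?thesis by simp
  next
    case (Suc j')
    then obtain p where "alt_word b a k = p @ alt_word b a j'" using Suc.IH Suc.prems by fastforce
    then show ?thesis using Suc by simp
  qed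
qed

lemma alt_word_of_square_free:
  assumes "set u \<subseteq> {s, r}" "s \<noteq> r" "\<And>p q a. u \<noteq> p @ [a, a] @ q" "u = [] \<or> last u = r"
  shows "u = alt_word s r (length u)"
  using assms
proof (induction u arbitrary: s r rule: rev_induct)
  case Nil
  then show ?case by simp
next
  case (snoc x u)
  have "x = r" using snoc.prems(4) by simp
  have "u = [] \<or> last u = s"
  proof (rule ccontr)
    assume "\<not> (u = [] \<or> last u = s)"
    moreover have "u \<noteq> [] \<Longrightarrow> last u \<in> {s, r}"
      using snoc.prems(1) by (metis last_in_set set_append Un_iff subsetD)
    ultimately have "u = butlast u @ [r]" by (metis append_butlast_last_id insertE singletonD)
    then show False
      using snoc.prems(3)[of "butlast u" r "[]"] \<open>x = r\<close> by (metis append.assoc append_Cons append_Nil)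
  qed
  moreover have "\<And>p q a. u \<noteq> p @ [a, a] @ q" using snoc.prems(3) by (metis append.assoc)
  ultimately have "u = alt_word r s (length u)"
    using snoc.IH[of r s] snoc.prems(1,2) by auto
  then show ?case using \<open>x = r\<close> by simp
qed

definition lincomb :: "nat \<Rightarrow> nat \<Rightarrow> int \<Rightarrow> int \<Rightarrow> nat \<Rightarrow> int" where
  "lincomb s r a b = (\<lambda>m. a * fund s m + b * fund r m)"

lemma lincomb_swap: "lincomb s r a b = lincomb r s b a"
  by (simp add: lincomb_def fun_eq_iff)

lemma fund_eq_lincomb: "fund s = lincomb s r 1 0"
  by (simp add: lincomb_def fun_eq_iff)

context cartan_action
begin

lemma pairing_lincomb:
  "s \<in> I \<Longrightarrow> r \<in> I \<Longrightarrow> pairing l (lincomb s r a b) = a * l s + b * l r"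
  unfolding lincomb_def using pairing_fund_right[of s l] pairing_fund_right[of r l]
  by (simp add: pairing_def algebra_simps sum.distrib flip: sum_distrib_left)

lemma coroot_sref_lincomb:
  assumes "s \<in> I" "r \<in> I" "s \<noteq> r"
  shows "coroot_sref s (lincomb s r a b) = lincomb s r (- a - b * A r s) b"
  using assms pairing_lincomb[OF assms(1,2), of "simple_root s"] cartan_diag[OF assms(1)]
  by (auto simp: coroot_sref_def lincomb_def fund_def simple_root_def fun_eq_iff)

lemma coroot_sref_lincomb':
  assumes "s \<in> I" "r \<in> I" "s \<noteq> r"
  shows "coroot_sref r (lincomb s r a b) = lincomb s r a (- b - a * A s r)"
  using coroot_sref_lincomb[of r s b a] assms by (simp add: lincomb_swap)

definition braid_order :: "nat \<Rightarrow> nat \<Rightarrow> nat" where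
  "braid_order s r = (if A s r = 0 then 2 else if A s r * A r s = 1 then 3 else 4)"

lemma braid_relation:
  assumes "s \<in> I" "r \<in> I" "s \<noteq> r"
  shows "weyl_eq (alt_word s r (braid_order s r)) (alt_word r s (braid_order s r))"
  using cartan_offdiag_cases[OF assms] assms
  by (elim disjE) (auto simp: braid_order_def weyl_eq_def eval_nat_numeral sref_def fun_eq_iff
      cartan_diag algebra_simps)

lemma coroot_act_alt_word_fund:
  assumes sr: "s \<in> I" "r \<in> I" "s \<noteq> r" and k: "k < braid_order s r"
  shows "\<exists>a b. 0 \<le> a \<and> 0 \<le> b \<and> coroot_act (alt_word s r k) (fund s) = lincomb s r a b"
proof -
  note steps = coroot_sref_lincomb[OF sr] coroot_sref_lincomb'[OF sr] fund_eq_lincomb[of s r]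
  note entries = cartan_offdiag_cases[OF sr]
  have "k \<le> 3" using k by (simp add: braid_order_def split: if_splits)
  then consider "k = 0" | "k = 1" | "k = 2" | "k = 3" by linarith
  then show ?thesis
  proof cases
    case 1
    then show ?thesis using steps(3) by (intro exI[of _ 1] exI[of _ 0]) simp
  next
    case 2
    then have "coroot_act (alt_word s r k) (fund s) = lincomb s r 1 (- A s r)" by (simp add: steps)
    moreover have "0 \<le> - A s r" using entries by auto
    ultimately show ?thesis by (intro exI[of _ 1] exI[of _ "- A s r"]) simp
  next
    case 3
    then have "coroot_act (alt_word s r k) (fund s) = lincomb s r (A s r * A r s - 1) (- A s r)"
      by (simp add: steps eval_nat_numeral algebra_simps)
    moreover have "A s r \<noteq> 0" using k 3 by (auto simp: braid_order_def)
    then have "0 \<le> A s r * A r s - 1" "0 \<le> - A s r" using entries by auto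
    ultimately show ?thesis by (intro exI[of _ "A s r * A r s - 1"] exI[of _ "- A s r"]) simp
  next
    case 4
    then have "coroot_act (alt_word s r k) (fund s) =
        lincomb s r (A s r * A r s - 1) ((2 - A s r * A r s) * A s r)"
      by (simp add: steps eval_nat_numeral algebra_simps)
    moreover have "A s r * A r s = 2" using k 4 entries by (auto simp: braid_order_def)
    ultimately show ?thesis by (intro exI[of _ 1] exI[of _ 0]) simp
  qed
qed

text \<open>The hypotheses force u to be an alternating word ending in r and shorter than the braid
  relation, where the claim is a direct computation.\<close>

lemma rank2_coroot_act_fund:
  assumes sr: "s \<in> I" "r \<in> I" "s \<noteq> r" and u: "set u \<subseteq> {s, r}"
    and minimal: "\<And>u'. set u' \<subseteq> {s, r} \<Longrightarrow> weyl_eq u' u \<Longrightarrow> length u \<le> length u'"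
    and no_descent: "\<And>u'. set u' \<subseteq> {s, r} \<Longrightarrow> weyl_eq u' (u @ [s]) \<Longrightarrow> length u \<le> length u'"
  shows "\<exists>a b. 0 \<le> a \<and> 0 \<le> b \<and> coroot_act u (fund s) = lincomb s r a b"
proof -
  have square_free: "u \<noteq> p @ [a, a] @ q" for p q a
  proof
    assume "u = p @ [a, a] @ q"
    then show False
      using minimal[of "p @ q"] weyl_eq_sym[OF weyl_eq_cancel_square] u by fastforce
  qed
  have "u = [] \<or> last u = r"
  proof (rule ccontr)
    assume "\<not> (u = [] \<or> last u = r)"
    moreover have "u \<noteq> [] \<Longrightarrow> last u \<in> {s, r}" using u last_in_set by blast
    ultimately obtain v where v: "u = v @ [s]" by (metis append_butlast_last_id insertE singletonD)
    have "weyl_eq v (u @ [s])"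
      using v weyl_eq_sym[OF weyl_eq_cancel_square[of v s "[]"]] by simp
    then show False using no_descent[of v] u v by simp
  qed
  define k where "k = length u"
  have alternating: "u = alt_word s r k"
    unfolding k_def using alt_word_of_square_free[OF u sr(3) square_free] \<open>u = [] \<or> last u = r\<close>
    by blast
  have "k < braid_order s r"
  proof (rule ccontr)
    define m where "m = braid_order s r - 1"
    have m: "braid_order s r = Suc m" by (simp add: m_def braid_order_def)
    assume "\<not> k < braid_order s r"
    then obtain p where p: "u = p @ alt_word s r (Suc m)"
      using alt_word_suffix[of "Suc m" k s r] alternating m by auto
    have "weyl_eq (u @ [s]) (p @ alt_word r s (Suc m) @ [s])"
      unfolding p append.assoc
      by (intro weyl_eq_append weyl_eq_refl braid_relation[OF sr, unfolded m])
    also have "weyl_eq \<dots> (p @ alt_word s r m)"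
      using weyl_eq_cancel_square[of "p @ alt_word s r m" s "[]"] by simp
    finally have "weyl_eq (p @ alt_word s r m) (u @ [s])" by (rule weyl_eq_sym)
    moreover have "set (p @ alt_word s r m) \<subseteq> {s, r}" using u p set_alt_word[of s r m] by auto
    ultimately have "length u \<le> length (p @ alt_word s r m)" using no_descent by blast
    then show False using p by simp
  qed
  then show ?thesis using coroot_act_alt_word_fund[OF sr] alternating by simp
qed

lemma coroot_act_lincomb:
  "coroot_act x (lincomb s r a b) =
    (\<lambda>m. a * coroot_act x (fund s) m + b * coroot_act x (fund r) m)"
  using coroot_act_add[of x "scale a (fund s)" "scale b (fund r)"] coroot_act_scale[of x]
  by (simp add: lincomb_def scale_def)

subsection \<open>Positivity of coroots\<close>

lemma descent_exists:
  assumes "set w \<subseteq> I" "weyl_length w \<noteq> 0"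
  shows "\<exists>r\<in>I. weyl_length (w @ [r]) < weyl_length w"
proof -
  obtain y where y: "set y \<subseteq> I" "weyl_eq y w" "length y = weyl_length w"
    using weyl_length_attained[OF assms(1)] by blast
  then obtain y' r where y': "y = y' @ [r]" using assms(2) by (metis length_0_conv rev_exhaust)
  have "weyl_eq (w @ [r]) (y' @ [r, r] @ [])"
    using weyl_eq_append[OF weyl_eq_sym[OF y(2)] weyl_eq_refl[of "[r]"]] y' by simp
  also have "weyl_eq \<dots> y'" using weyl_eq_cancel_square[of y' r "[]"] by simp
  finally have "weyl_eq y' (w @ [r])" by (rule weyl_eq_sym)
  then have "weyl_length (w @ [r]) \<le> length y'" using weyl_length_le y y' by auto
  then show ?thesis using y y' by (intro bexI[of _ r]) auto
qed

text \<open>Among the length-additive factorisations take one with v shortest; moving a last letter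
  of v into u shows that v is then minimal in its coset.\<close>

lemma parabolic_factorisation:
  assumes w: "set w \<subseteq> I" and sr: "s \<in> I" "r \<in> I"
    and descent: "weyl_length (w @ [r]) < weyl_length w"
  obtains v u where "set v \<subseteq> I" "set u \<subseteq> {s, r}" "weyl_eq w (v @ u)"
    "weyl_length w = weyl_length v + length u" "weyl_length v < weyl_length w"
    "\<And>a. a \<in> {s, r} \<Longrightarrow> weyl_length v \<le> weyl_length (v @ [a])"
proof -
  define P where "P = (\<lambda>(v, u). set v \<subseteq> I \<and> set u \<subseteq> {s, r} \<and> weyl_eq w (v @ u) \<and>
    weyl_length w = weyl_length v + length u)"
  obtain y where y: "set y \<subseteq> I" "weyl_eq y (w @ [r])" "length y = weyl_length (w @ [r])"
    using weyl_length_attained[of "w @ [r]"] w sr by auto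
  have "weyl_eq w (w @ [r] @ [r])"
    using weyl_eq_sym[OF weyl_eq_cancel_square[of w r "[]"]] by simp
  also have "weyl_eq \<dots> (y @ [r])"
    using weyl_eq_append[OF weyl_eq_sym[OF y(2)] weyl_eq_refl[of "[r]"]] by simp
  finally have "weyl_eq w (y @ [r])" .
  moreover have "weyl_length w = weyl_length y + length [r]"
    using weyl_length_snoc_ge[OF w sr(2)] descent weyl_length_weyl_eq[OF y(2)] by simp
  ultimately have Py: "P (y, [r])" using y(1) by (simp add: P_def)
  obtain vu where Pvu: "P vu"
    and least: "\<And>z. P z \<Longrightarrow> weyl_length (fst vu) \<le> weyl_length (fst z)"
    using ex_has_least_nat[of P "(y, [r])" "\<lambda>z. weyl_length (fst z)"] Py by blast
  obtain v u where vu: "vu = (v, u)" by (cases vu)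
  have v: "set v \<subseteq> I" and u: "set u \<subseteq> {s, r}" and wvu: "weyl_eq w (v @ u)"
    and lw: "weyl_length w = weyl_length v + length u"
    using Pvu vu by (auto simp: P_def)
  have "weyl_length v < weyl_length w"
    using least[OF Py] vu descent weyl_length_weyl_eq[OF y(2)] by simp
  moreover have "weyl_length v \<le> weyl_length (v @ [a])" if a: "a \<in> {s, r}" for a
  proof (rule ccontr)
    assume lt: "\<not> weyl_length v \<le> weyl_length (v @ [a])"
    have aI: "a \<in> I" using a sr by auto
    have "weyl_eq w ((v @ [a]) @ (a # u))"
      using weyl_eq_trans[OF wvu weyl_eq_sym[OF weyl_eq_cancel_square[of v a u]]] by simp
    moreover have "weyl_length w = weyl_length (v @ [a]) + length (a # u)"
      using weyl_length_snoc_ge[OF v aI] lt lw by simp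
    ultimately have "P (v @ [a], a # u)" using v u a aI by (simp add: P_def)
    from least[OF this] show False using vu lt by simp
  qed
  ultimately show thesis by (intro that[OF v u wvu lw]) auto
qed

lemma coset_factor_coroot_act_fund:
  assumes s: "s \<in> I" and r: "r \<in> I" "r \<noteq> s" and v: "set v \<subseteq> I" and u: "set u \<subseteq> {s, r}"
    and wvu: "weyl_eq w (v @ u)" and lw: "weyl_length w = weyl_length v + length u"
    and no_descent: "weyl_length w \<le> weyl_length (w @ [s])"
  shows "\<exists>a b. 0 \<le> a \<and> 0 \<le> b \<and> coroot_act u (fund s) = lincomb s r a b"
proof (rule rank2_coroot_act_fund[OF s r(1) r(2)[symmetric] u])
  have bound: "weyl_length x \<le> weyl_length v + length u'"
    if "set u' \<subseteq> {s, r}" "weyl_eq x (v @ u')" for x u'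
    using weyl_length_weyl_eq_append_le[OF that(2) v] that(1) s r by blast
  show "length u \<le> length u'" if "set u' \<subseteq> {s, r}" "weyl_eq u' u" for u'
    using bound[OF that(1) weyl_eq_trans[OF wvu weyl_eq_append[OF weyl_eq_refl weyl_eq_sym[OF that(2)]]]]
      lw by simp
  show "length u \<le> length u'" if "set u' \<subseteq> {s, r}" "weyl_eq u' (u @ [s])" for u'
  proof -
    have "weyl_eq ((v @ u) @ [s]) (v @ u')"
      using weyl_eq_append[OF weyl_eq_refl[of v] weyl_eq_sym[OF that(2)]] by simp
    then have "weyl_eq (w @ [s]) (v @ u')"
      by (rule weyl_eq_trans[OF weyl_eq_append[OF wvu weyl_eq_refl[of "[s]"]]])
    from bound[OF that(1) this] show ?thesis using lw no_descent by linarith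
  qed
qed

text \<open>Deodhar's argument: split w = v u with u in the parabolic subgroup generated by s and a
  right descent r of w and v minimal in its coset; the rank two case handles u and induction on
  the length handles v.\<close>

lemma coroot_act_fund_nonneg:
  "set w \<subseteq> I \<Longrightarrow> s \<in> I \<Longrightarrow> weyl_length w \<le> weyl_length (w @ [s]) \<Longrightarrow>
    0 \<le> coroot_act w (fund s) m"
proof (induction "weyl_length w" arbitrary: w s m rule: less_induct)
  case less
  note w = less.prems(1) and s = less.prems(2) and no_descent = less.prems(3)
  show ?case
  proof (cases "weyl_length w = 0")
    case True
    obtain y where "set y \<subseteq> I" "weyl_eq y w" "length y = weyl_length w"
      using weyl_length_attained[OF w] by blast
    with True have "weyl_eq w []" by (metis length_0_conv weyl_eq_sym)
    then have "coroot_act w (fund s) = fund s" using coroot_act_weyl_eq fund_supported[OF s] by simp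
    then show ?thesis by (simp add: fund_def)
  next
    case False
    then obtain r where r: "r \<in> I" and descent: "weyl_length (w @ [r]) < weyl_length w"
      using descent_exists[OF w] by blast
    then have "r \<noteq> s" using no_descent by auto
    obtain v u where v: "set v \<subseteq> I" and u: "set u \<subseteq> {s, r}" and wvu: "weyl_eq w (v @ u)"
      and lw: "weyl_length w = weyl_length v + length u"
      and shorter: "weyl_length v < weyl_length w"
      and coset_min: "\<And>a. a \<in> {s, r} \<Longrightarrow> weyl_length v \<le> weyl_length (v @ [a])"
      using parabolic_factorisation[OF w s r descent] by blast
    obtain a b where ab: "0 \<le> a" "0 \<le> b" and cu: "coroot_act u (fund s) = lincomb s r a b"
      using coset_factor_coroot_act_fund[OF s r \<open>r \<noteq> s\<close> v u wvu lw no_descent] by blast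
    have "coroot_act w (fund s) = coroot_act v (coroot_act u (fund s))"
      using coroot_act_weyl_eq[OF wvu fund_supported[OF s]] by (simp add: coroot_act_append)
    moreover have "0 \<le> coroot_act v (fund s) m" "0 \<le> coroot_act v (fund r) m"
      using less.hyps[OF shorter v s coset_min] less.hyps[OF shorter v r coset_min] by auto
    ultimately show ?thesis using ab cu by (simp add: coroot_act_lincomb)
  qed
qed

subsection \<open>Inversion coroots\<close>

lemma coroot_act_fund_nonzero:
  assumes "s \<in> I"
  shows "\<exists>m. coroot_act z (fund s) m \<noteq> 0"
proof (rule ccontr)
  assume "\<not> (\<exists>m. coroot_act z (fund s) m \<noteq> 0)"
  then have "coroot_act z (fund s) = scale 0 (fund s)" by (auto simp: scale_def fun_eq_iff)
  then have "fund s = scale 0 (coroot_act (rev z) (fund s))"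
    using coroot_act_rev_cancel[of z "fund s"] coroot_act_scale[of "rev z"] by simp
  then have "fund s s = 0" by (simp add: scale_def)
  then show False by (simp add: fund_def)
qed

lemma coroot_act_fund_sign:
  assumes z: "set z \<subseteq> I" and s: "s \<in> I"
  shows "(\<forall>m. 0 \<le> coroot_act z (fund s) m) \<or> (\<forall>m. coroot_act z (fund s) m \<le> 0)"
proof (cases "weyl_length z \<le> weyl_length (z @ [s])")
  case True
  then show ?thesis using coroot_act_fund_nonneg[OF z s] by blast
next
  case False
  have "weyl_length ((z @ [s]) @ [s]) = weyl_length z"
    using weyl_length_weyl_eq[OF weyl_eq_cancel_square[of z s "[]"]] by simp
  then have "0 \<le> coroot_act (z @ [s]) (fund s) m" for m
    using coroot_act_fund_nonneg[of "z @ [s]" s] z s False by simp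
  moreover have "coroot_act (z @ [s]) (fund s) = scale (-1) (coroot_act z (fund s))"
    by (simp add: coroot_act_append coroot_sref_fund_self[OF s] coroot_act_scale)
  ultimately show ?thesis by (simp add: scale_def)
qed

text \<open>For a reduced word x = s_{i_1} ... s_{i_r} these are the coroots
  s_{i_r} ... s_{i_{q+2}} (alpha_{i_{q+1}})^vee (list positions q counted from 0), the positive
  coroots that x sends to negative ones.\<close>

definition inversion_coroot :: "nat list \<Rightarrow> nat \<Rightarrow> nat \<Rightarrow> int" where
  "inversion_coroot x q = coroot_act (rev (drop (Suc q) x)) (fund (x ! q))"

lemma pairing_inversion_coroot:
  assumes "set x \<subseteq> I" "q < length x"
  shows "word_act t n (drop (Suc q) x) L (x ! q) = pairing L (inversion_coroot x q)"
  using pairing_word_act[of "drop (Suc q) x" L "fund (x ! q)"]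
    pairing_fund_right[of "x ! q" "word_act t n (drop (Suc q) x) L"] assms
  by (simp add: inversion_coroot_def nth_mem subset_iff)

lemma inversion_coroot_supported: "set x \<subseteq> I \<Longrightarrow> q < length x \<Longrightarrow> supported (inversion_coroot x q)"
  unfolding inversion_coroot_def
  by (intro coroot_act_supported fund_supported) (simp add: nth_mem subset_iff)

lemma inversion_coroot_nonneg:
  assumes x: "reduced x" and q: "q < length x"
  shows "0 \<le> inversion_coroot x q m"
proof -
  have xq: "x ! q \<in> I" and d: "set (rev (drop (Suc q) x)) \<subseteq> I"
    using x q by (auto simp: reduced_def nth_mem subset_iff dest: in_set_dropD)
  have "drop q x = x ! q # drop (Suc q) x" using q by (simp add: Cons_nth_drop_Suc)
  moreover have "reduced (rev (drop q x))" using x reduced_drop reduced_rev by blast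
  ultimately have "weyl_length (rev (drop (Suc q) x) @ [x ! q]) = length x - q"
    using q by (simp add: reduced_def)
  moreover have "weyl_length (rev (drop (Suc q) x)) \<le> length x - Suc q"
    using weyl_length_le_length[OF d] by simp
  ultimately show ?thesis unfolding inversion_coroot_def using coroot_act_fund_nonneg[OF d xq] q by simp
qed

lemma coroot_act_inversion_coroot_nonpos:
  assumes x: "reduced x" and q: "q < length x"
  shows "coroot_act x (inversion_coroot x q) m \<le> 0"
proof -
  have xq: "x ! q \<in> I" and tk: "set (take q x) \<subseteq> I"
    using x q by (auto simp: reduced_def nth_mem subset_iff dest: in_set_takeD)
  have take: "take (Suc q) x = take q x @ [x ! q]" using q by (simp add: take_Suc_conv_app_nth)
  have "coroot_act x (inversion_coroot x q) = coroot_act (take (Suc q) x) (fund (x ! q))"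
    unfolding inversion_coroot_def by (metis append_take_drop_id coroot_act_append coroot_act_rev_cancel')
  also have "\<dots> = scale (-1) (coroot_act (take q x) (fund (x ! q)))"
    using take by (simp add: coroot_act_append coroot_sref_fund_self[OF xq] coroot_act_scale)
  finally have neg:
    "coroot_act x (inversion_coroot x q) = scale (-1) (coroot_act (take q x) (fund (x ! q)))" .
  have "reduced (take (Suc q) x)" using x reduced_take by blast
  then have "weyl_length (take q x @ [x ! q]) = Suc q" using take q by (simp add: reduced_def)
  moreover have "weyl_length (take q x) \<le> q" using weyl_length_le_length[OF tk] by simp
  ultimately have "0 \<le> coroot_act (take q x) (fund (x ! q)) m"
    using coroot_act_fund_nonneg[OF tk xq] by simp
  then show ?thesis using neg by (simp add: scale_def)
qed

text \<open>Conversely, a positive coroot sent to a negative one by x is an inversion coroot: follow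
  it along the suffixes of x; at the last suffix where it is still nonnegative, the next simple
  reflection must flip its sign, which forces it to be a multiple of that simple coroot.\<close>

lemma negated_coroot_is_inversion_coroot:
  assumes x: "reduced x" and z: "set z \<subseteq> I" and m0: "m0 \<in> I"
    and g: "g = coroot_act z (fund m0)" and nonneg: "\<And>m. 0 \<le> g m" and nonpos: "\<And>m. coroot_act x g m \<le> 0"
  shows "\<exists>k < length x. \<exists>c > 0. g = scale c (inversion_coroot x k)"
proof -
  have xI: "set x \<subseteq> I" using x by (simp add: reduced_def)
  define P where "P = (\<lambda>k. k \<le> length x \<and> (\<forall>m. 0 \<le> coroot_act (drop k x) g m))"
  have "P (length x)" using nonneg by (simp add: P_def)
  then have Pk0: "P (LEAST k. P k)" by (rule LeastI)
  have "(LEAST k. P k) \<noteq> 0"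
  proof
    assume "(LEAST k. P k) = 0"
    then have "coroot_act x g m = 0" for m using Pk0 nonpos[of m] by (simp add: P_def order_antisym)
    then show False using coroot_act_fund_nonzero[OF m0, of "x @ z"] g by (simp add: coroot_act_append)
  qed
  then obtain k where k0: "(LEAST k. P k) = Suc k" using not0_implies_Suc by blast
  have notPk: "\<not> P k" using not_less_Least[of k P] k0 by simp
  have k: "k < length x" using Pk0 k0 by (simp add: P_def)
  define j where "j = x ! k"
  define d where "d = coroot_act (drop (Suc k) x) g"
  have dk: "coroot_act (drop k x) g = coroot_sref j d"
    using k by (simp add: d_def j_def Cons_nth_drop_Suc[symmetric])
  have d_nonneg: "0 \<le> d m" for m using Pk0 k0 by (simp add: P_def d_def)
  have "set (drop k x @ z) \<subseteq> I" using xI z by (auto dest: in_set_dropD)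
  from coroot_act_fund_sign[OF this m0] have "\<forall>m. coroot_sref j d m \<le> 0"
    using notPk k dk by (auto simp: P_def coroot_act_append g[symmetric])
  then have off: "d m = 0" if "m \<noteq> j" for m
    using d_nonneg[of m] that by (metis coroot_sref_def fun_upd_other order_antisym)
  have "\<exists>m. d m \<noteq> 0"
    using coroot_act_fund_nonzero[OF m0, of "drop (Suc k) x @ z"] g by (simp add: d_def coroot_act_append)
  then have pos: "0 < d j" using off d_nonneg by (metis order_less_le)
  define c where "c = d j"
  have "d = scale c (fund j)" using off by (auto simp: c_def scale_def fund_def fun_eq_iff)
  then have "coroot_act (rev (drop (Suc k) x)) d = scale c (inversion_coroot x k)"
    by (simp add: coroot_act_scale inversion_coroot_def j_def)
  then have "g = scale c (inversion_coroot x k)" by (simp add: d_def coroot_act_rev_cancel)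
  then show ?thesis using k pos c_def by blast
qed

lemma inversion_coroot_not_proportional_less:
  assumes x: "reduced x" and pp: "p < p'" "p' < length x" and c: "0 < c1" "0 < c2"
  shows "scale c1 (inversion_coroot x p) \<noteq> scale c2 (inversion_coroot x p')"
proof
  assume eq: "scale c1 (inversion_coroot x p) = scale c2 (inversion_coroot x p')"
  have xI: "set x \<subseteq> I" using x by (simp add: reduced_def)
  define y where "y = take (p' - Suc p) (drop (Suc p) x)"
  define j where "j = x ! p'"
  define D where "D = drop (Suc p') x"
  define E where "E = coroot_act (rev y) (fund (x ! p))"
  have jI: "j \<in> I" and pI: "x ! p \<in> I" using xI pp by (auto simp: j_def nth_mem subset_iff)
  have "drop (Suc p) x = y @ drop p' x"
    using pp by (metis append_take_drop_id drop_drop Suc_leI le_add_diff_inverse2 y_def)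
  then have split: "drop (Suc p) x = y @ j # D" using pp by (simp add: j_def D_def Cons_nth_drop_Suc)
  have "coroot_act D (scale c1 (inversion_coroot x p)) = coroot_act D (scale c2 (inversion_coroot x p'))"
    using eq by simp
  then have "scale c1 (coroot_sref j E) = scale c2 (fund j)"
    by (simp add: inversion_coroot_def split coroot_act_append E_def D_def j_def coroot_act_scale
        coroot_act_rev_cancel')
  then have "scale c1 E = scale c2 (scale (-1) (fund j))"
    by (metis coroot_sref_sref coroot_sref_fund_self[OF jI] coroot_sref_scale)
  then have Ej: "c1 * E j = - c2" by (simp add: scale_def fun_eq_iff fund_def)
  have yI: "set (rev y) \<subseteq> I" using xI by (auto simp: y_def dest: in_set_dropD in_set_takeD)
  have "drop p x = x ! p # drop (Suc p) x" using pp by (simp add: Cons_nth_drop_Suc)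
  moreover have "p' - p = Suc (p' - Suc p)" using pp by simp
  ultimately have "x ! p # y = take (p' - p) (drop p x)" by (simp add: y_def)
  then have "reduced (rev (x ! p # y))" using x reduced_drop reduced_take reduced_rev by metis
  then have "weyl_length (rev y @ [x ! p]) = length y + 1" by (simp add: reduced_def)
  moreover have "weyl_length (rev y) \<le> length y" using weyl_length_le_length[OF yI] by simp
  ultimately have "0 \<le> E j" unfolding E_def using coroot_act_fund_nonneg[OF yI pI] by simp
  then show False using Ej c by (smt (verit) mult_nonneg_nonneg)
qed

lemma inversion_coroot_not_proportional:
  assumes "reduced x" "p < length x" "p' < length x" "0 < c1" "0 < c2"
    and "scale c1 (inversion_coroot x p) = scale c2 (inversion_coroot x p')"
  shows "p = p'"
  using inversion_coroot_not_proportional_less[of x p p' c1 c2]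
    inversion_coroot_not_proportional_less[of x p' p c2 c1] assms
  by (metis linorder_neqE_nat)

lemma inversion_coroot_multiple:
  assumes x: "reduced x" and y: "reduced y" and xy: "weyl_eq x y" and p: "p < length y"
  shows "\<exists>k < length x. \<exists>c > 0. inversion_coroot y p = scale c (inversion_coroot x k)"
proof (rule negated_coroot_is_inversion_coroot[OF x _ _ inversion_coroot_def])
  have yI: "set y \<subseteq> I" using y by (simp add: reduced_def)
  then show "set (rev (drop (Suc p) y)) \<subseteq> I" "y ! p \<in> I"
    using p by (auto simp: nth_mem subset_iff dest: in_set_dropD)
  show "0 \<le> inversion_coroot y p m" for m using inversion_coroot_nonneg[OF y p] .
  show "coroot_act x (inversion_coroot y p) m \<le> 0" for m
    using coroot_act_weyl_eq[OF xy inversion_coroot_supported[OF yI p]]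
      coroot_act_inversion_coroot_nonpos[OF y p] by simp
qed

subsection \<open>The minuscule condition\<close>

definition minuscule_word :: "(nat \<Rightarrow> int) \<Rightarrow> nat list \<Rightarrow> bool" where
  "minuscule_word L x \<longleftrightarrow> (\<forall>q < length x. word_act t n (drop (Suc q) x) L (x ! q) = 1)"

text \<open>The minuscule condition depends only on the set of inversion coroots, which is the same
  for all reduced words of one Weyl group element.\<close>

lemma minuscule_word_transfer:
  assumes x: "reduced x" and y: "reduced y" and xy: "weyl_eq x y"
    and minx: "minuscule_word L x"
  shows "minuscule_word L y"
  unfolding minuscule_word_def
proof (intro allI impI)
  fix p assume p: "p < length y"
  have xI: "set x \<subseteq> I" and yI: "set y \<subseteq> I" using x y by (auto simp: reduced_def)
  obtain k c where k: "k < length x" and c: "0 < c"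
    and yx: "inversion_coroot y p = scale c (inversion_coroot x k)"
    using inversion_coroot_multiple[OF x y xy p] by blast
  obtain p' c' where p': "p' < length y" and c': "0 < c'"
    and xy': "inversion_coroot x k = scale c' (inversion_coroot y p')"
    using inversion_coroot_multiple[OF y x weyl_eq_sym[OF xy] k] by blast
  have "scale 1 (inversion_coroot y p) = scale (c * c') (inversion_coroot y p')"
    using yx xy' by (simp add: scale_def fun_eq_iff)
  moreover have "0 < c * c'" using c c' by simp
  ultimately have "p = p'" using inversion_coroot_not_proportional[OF y p p' zero_less_one] by blast
  have one: "pairing L (inversion_coroot x k) = 1"
    using minx[unfolded minuscule_word_def, rule_format, OF k] pairing_inversion_coroot[OF xI k, of L]
    by simp
  then have "pairing L (inversion_coroot y p) = c" using yx by (simp add: pairing_scale)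
  moreover have "1 = c' * pairing L (inversion_coroot y p)"
    using one xy' \<open>p = p'\<close> by (simp add: pairing_scale)
  ultimately have "c = 1" using c c' by (simp add: pos_zmult_eq_1_iff)
  then show "word_act t n (drop (Suc p) y) L (y ! p) = 1"
    using pairing_inversion_coroot[OF yI p] \<open>pairing L (inversion_coroot y p) = c\<close> by simp
qed

lemma minuscule_every_reduced_expr:
  assumes "lam_minuscule t n L w" "reduced_expr t n w ws"
  shows "minuscule_word L ws"
proof -
  obtain vs where vs: "reduced_expr t n w vs" and minvs: "minuscule_word L vs"
    using assms(1) by (auto simp: lam_minuscule_def minuscule_word_def)
  have "weyl_eq vs ws" using vs assms(2) by (simp add: reduced_expr_def weyl_elt_eq_iff[symmetric])
  then show ?thesis
    using minuscule_word_transfer[OF reduced_expr_imp_reduced[OF vs]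
        reduced_expr_imp_reduced[OF assms(2)] _ minvs] by blast
qed

lemma word_act_minuscule:
  "minuscule_word L x \<Longrightarrow> word_act t n x L j = L j - (\<Sum>b<length x. A j (x ! b))"
proof (induction x arbitrary: j)
  case (Cons a x)
  have "word_act t n x L a = 1" using Cons.prems by (force simp: minuscule_word_def)
  moreover have "minuscule_word L x" using Cons.prems by (force simp: minuscule_word_def)
  ultimately show ?case using Cons.IH
    by (simp add: sref_def sum.lessThan_Suc_shift del: sum.lessThan_Suc)
qed simp

lemma minuscule_tail_sum:
  assumes minuscule: "minuscule_word L x" and p: "p < length x"
  shows "(\<Sum>b<length x - Suc p. A (x ! p) (x ! (Suc p + b))) = L (x ! p) - 1"
proof -
  have "minuscule_word L (drop (Suc p) x)"
    using minuscule by (auto simp: minuscule_word_def add.commute)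
  from word_act_minuscule[OF this, of "x ! p"] show ?thesis
    using minuscule p by (simp add: minuscule_word_def)
qed

lemma even_cartan_sum_iff:
  fixes N :: nat
  shows "even (\<Sum>b<N. A j (f b)) \<longleftrightarrow> even (card {b \<in> {..<N}. A j (f b) = -1})"
  using even_sum_iff[of "{..<N}" "\<lambda>b. A j (f b)"] by (simp add: odd_cartan_iff)

lemma card_later_adjacent:
  assumes "set ws \<subseteq> I"
  shows "card {a \<in> {p+1..length ws}. ws ! (a - 1) \<in> adj_s t n j} =
    card {b \<in> {..<length ws - p}. A j (ws ! (p + b)) = -1}"
proof -
  have "bij_betw (\<lambda>b. p + b + 1) {b \<in> {..<length ws - p}. A j (ws ! (p + b)) = -1}
      {a \<in> {p+1..length ws}. ws ! (a - 1) \<in> adj_s t n j}"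
    using assms by (intro bij_betw_byWitness[where f' = "\<lambda>a. a - p - 1"])
      (auto simp: adj_s_def nth_mem subset_iff)
  then show ?thesis by (simp add: bij_betw_same_card)
qed

end

theorem lemma6p5:
  fixes t :: ctype and n i :: nat
    and w :: "(nat \<Rightarrow> int) \<Rightarrow> (nat \<Rightarrow> int)" and ws :: "nat list"
  assumes "valid_type t n"
    and "i \<in> Kset t n"
    and "strong_minuscule t n w"
    and "Lambda_w t n w = fund i"
    and "reduced_expr t n w ws"
  shows "\<forall>p \<in> {1..length ws - 1}.
           (let u = card {a \<in> {p+1..length ws}. ws ! (a - 1) \<in> adj_s t n (ws ! (p - 1))} in
              (ws ! (p - 1) = i \<longrightarrow> even u) \<and>
              (ws ! (p - 1) \<noteq> i \<longrightarrow> odd u \<and> u > 0))"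
proof -
  interpret cartan_action t n .
  have "\<exists>!L. L \<in> Pplus n \<and> lam_minuscule t n L w" using assms(3) by (simp add: strong_minuscule_def)
  from theI'[OF this] have "lam_minuscule t n (fund i) w" using assms(4) by (simp add: Lambda_w_def)
  then have minuscule: "minuscule_word (fund i) ws"
    using minuscule_every_reduced_expr assms(5) by blast
  have wsI: "set ws \<subseteq> I" using assms(5) by (simp add: reduced_expr_def)
  show ?thesis
  proof
    fix p assume p: "p \<in> {1..length ws - 1}"
    define j where "j = ws ! (p - 1)"
    have "p - 1 < length ws" "Suc (p - 1) = p" using p by auto
    from minuscule_tail_sum[OF minuscule this(1)] this(2)
    have "(\<Sum>b<length ws - p. A j (ws ! (p + b))) = fund i j - 1" by (simp add: j_def)
    then have parity: "even (card {a \<in> {p+1..length ws}. ws ! (a - 1) \<in> adj_s t n j}) \<longleftrightarrow>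
        even (fund i j - 1)"
      using even_cartan_sum_iff card_later_adjacent[OF wsI] by metis
    show "let u = card {a \<in> {p+1..length ws}. ws ! (a - 1) \<in> adj_s t n (ws ! (p - 1))} in
        (ws ! (p - 1) = i \<longrightarrow> even u) \<and> (ws ! (p - 1) \<noteq> i \<longrightarrow> odd u \<and> u > 0)"
      unfolding Let_def j_def[symmetric] using parity by (auto simp: fund_def intro: odd_pos)
  qed
qed

end
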